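(* Let $p$ be a prime and $q=p^r$. Suppose there is an integer $b$ with $1<b<p-1$ and $\gcd(b,q-1)=1$. Then for every $n\ge 1$ there exists a local permutation polynomial $F\in\mathbb{F}_p[x_1,\dots,x_n]$ (viewed over $\mathbb{F}_q$) of degree $n(q-2)$.
   Context: $\mathbb{F}_q$ is the finite field with $q=p^r$ elements. A polynomial $f\in\mathbb{F}_q[x_1,\dots,x_n]$ is a local permutation polynomial (LPP) if, for each $i$ and each choice of the other coordinates $(a_j)_{j\ne i}\in\mathbb{F}_q^{n-1}$, the univariate polynomial in $x_i$ obtained by fixing $x_j=a_j$ for $j\ne i$ induces a bijection of $\mathbb{F}_q$. Polynomials are reduced (degree $<q$ in each variable), and degree means total degree. *)

theory Defs
  imports "HOL-Computational_Algebra.Primes"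
begin

text \<open>A polynomial in x_0,...,x_{n-1} over a field, reduced w.r.t. q (degree < q in each
variable), is represented by its coefficient function on exponent vectors.\<close>

definition exp_box :: "nat \<Rightarrow> nat \<Rightarrow> (nat \<Rightarrow> nat) set" where
  "exp_box n q = {e. (\<forall>i<n. e i < q) \<and> (\<forall>i\<ge>n. e i = 0)}"

definition reduced_mpoly :: "nat \<Rightarrow> nat \<Rightarrow> ((nat \<Rightarrow> nat) \<Rightarrow> 'a::zero) \<Rightarrow> bool" where
  "reduced_mpoly n q c \<longleftrightarrow> (\<forall>e. c e \<noteq> 0 \<longrightarrow> e \<in> exp_box n q)"

definition mpoly_eval :: "nat \<Rightarrow> nat \<Rightarrow> ((nat \<Rightarrow> nat) \<Rightarrow> 'a::comm_ring_1) \<Rightarrow> (nat \<Rightarrow> 'a) \<Rightarrow> 'a" where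
  "mpoly_eval n q c x = (\<Sum>e\<in>exp_box n q. c e * (\<Prod>i<n. x i ^ e i))"

definition mpoly_total_degree :: "nat \<Rightarrow> nat \<Rightarrow> ((nat \<Rightarrow> nat) \<Rightarrow> 'a::zero) \<Rightarrow> nat" where
  "mpoly_total_degree n q c = Max ((\<lambda>e. \<Sum>i<n. e i) ` {e \<in> exp_box n q. c e \<noteq> 0})"

definition is_LPP :: "nat \<Rightarrow> nat \<Rightarrow> ((nat \<Rightarrow> nat) \<Rightarrow> 'a::comm_ring_1) \<Rightarrow> bool" where
  "is_LPP n q c \<longleftrightarrow> (\<forall>i<n. \<forall>a :: nat \<Rightarrow> 'a. bij (\<lambda>t. mpoly_eval n q c (a(i := t))))"

end

theory Submission
  imports Defs "HOL-Number_Theory.Residues" "HOL-Computational_Algebra.Polynomial" "HOL-Library.Cardinality" "HOL-Library.FuncSet"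
begin

text \<open>
  Over \<open>F_q\<close> every function \<open>F_q^n \<rightarrow> F_q\<close> is a unique reduced polynomial, obtained by
  Lagrange interpolation. If the function is a permutation in each coordinate, the coefficient of
  any monomial containing \<open>x_j^(q-1)\<close> is, up to sign, a sum of \<open>\<Sum>t. t = 0\<close> over the lines in
  direction \<open>j\<close>; so the degree is at most \<open>n(q-2)\<close>, with equality iff the coefficient of
  \<open>\<Prod>i. x_i^(q-2)\<close>, which is \<open>(-1)^n \<Sum>a. F a \<Prod>i. a_i\<close>, does not vanish.

  Take \<open>F = P_n^b\<close> with \<open>P_0 = 1\<close> and \<open>P_(m+1) = 1/P_m + 1/x_m\<close> (where \<open>1/0 = 0\<close>): \<open>P_n\<close> is a
  permutation in each variable, and so is \<open>F\<close> because \<open>gcd(b, q-1) = 1\<close>. Summing out the last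
  variable gives \<open>T_j(m+1) = -j T_(q-j)(m)\<close> for the moments \<open>T_j(m) = \<Sum>a. P_m(a)^j \<Prod>i. a_i\<close>,
  so \<open>T_b(n)\<close> is a signed power of \<open>b\<close>, nonzero as \<open>p\<close> does not divide \<open>b\<close>. Finally \<open>F\<close> commutes with
  the Frobenius map, hence so do its interpolation coefficients, which therefore lie in \<open>F_p\<close>.
\<close>

section \<open>Finite fields\<close>

lemma card_finite_field_ge_2: "CARD('a::{finite,field}) \<ge> 2"
proof -
  have "card {0::'a, 1} \<le> CARD('a)" by (intro card_mono) auto
  thus ?thesis by simp
qed

lemma finite_field_power_card_minus_1:
  fixes x :: "'a::{finite,field}"
  assumes "x \<noteq> 0"
  shows "x ^ (CARD('a) - 1) = 1"
proof -
  have "(\<Prod>y\<in>UNIV-{0}. y) = (\<Prod>y\<in>UNIV-{0}. x * y)"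
    by (rule prod.reindex_bij_witness[of _ "\<lambda>y. x * y" "\<lambda>y. y / x"]) (use assms in auto)
  also have "\<dots> = x ^ (CARD('a) - 1) * (\<Prod>y\<in>UNIV-{0}. y)"
    by (simp add: prod.distrib card_Diff_singleton)
  finally show ?thesis
    by simp
qed

lemma finite_field_power_card:
  fixes x :: "'a::{finite,field}"
  shows "x ^ CARD('a) = x"
proof (cases "x = 0")
  case False
  have "x ^ CARD('a) = x * x ^ (CARD('a) - 1)"
    using card_finite_field_ge_2[where 'a='a] by (simp flip: power_Suc)
  with False show ?thesis
    using finite_field_power_card_minus_1[OF False] by simp
qed (use card_finite_field_ge_2[where 'a='a] in \<open>simp add: power_0_left\<close>)

lemma finite_field_power_mod:
  fixes x :: "'a::{finite,field}"
  assumes "m \<ge> 1"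
  shows "x ^ (m + k * (CARD('a) - 1)) = x ^ m"
proof (cases "x = 0")
  case False
  have "x ^ (m + k * (CARD('a) - 1)) = x ^ m * (x ^ (CARD('a) - 1)) ^ k"
    by (metis power_add power_mult mult.commute)
  thus ?thesis using finite_field_power_card_minus_1[OF False] by simp
qed (use assms in \<open>simp add: power_0_left\<close>)

lemma of_nat_card_finite_field: "of_nat CARD('a::{finite,field}) = (0::'a)"
  using CHAR_dvd_CARD[where 'a='a] of_nat_eq_0_iff_char_dvd by blast

text \<open>This includes \<open>x = 0\<close>, since \<open>inverse 0 = 0\<close> in Isabelle.\<close>

lemma inverse_eq_power_card_minus_2:
  fixes x :: "'a::{finite,field}"
  assumes "CARD('a) \<ge> 3"
  shows "inverse x = x ^ (CARD('a) - 2)"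
proof (cases "x = 0")
  case False
  have "Suc (CARD('a) - 2) = CARD('a) - 1"
    using assms by arith
  hence "x * x ^ (CARD('a) - 2) = 1"
    using finite_field_power_card_minus_1[OF False] by (simp flip: power_Suc)
  with False show ?thesis
    by (simp add: field_simps)
qed (use assms in \<open>simp add: power_0_left\<close>)

lemma power_inverse_eq_power_card_minus:
  fixes x :: "'a::{finite,field}"
  assumes "2 \<le> j" "j < CARD('a)"
  shows "inverse x ^ (j - 1) = x ^ (CARD('a) - j)"
proof (cases "x = 0")
  case False
  have "x ^ (CARD('a) - j) * x ^ (j - 1) = x ^ (CARD('a) - 1)"
    using assms by (simp flip: power_add)
  with False show ?thesis
    using finite_field_power_card_minus_1[OF False] by (simp add: field_simps)
qed (use assms in \<open>simp add: power_0_left\<close>)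

lemma finite_field_power_sum_eq_0:
  assumes "1 \<le> k" "k < CARD('a::{finite,field}) - 1"
  shows "(\<Sum>s\<in>(UNIV::'a set). s ^ k) = 0"
proof -
  define f :: "'a poly" where "f = monom 1 k - 1"
  have "degree f \<le> k"
    unfolding f_def by (intro degree_diff_le) (auto simp: degree_monom_le)
  moreover have "f \<noteq> 0"
    using assms by (auto simp: f_def poly_monom power_0_left dest: arg_cong[where f="\<lambda>f. poly f 0"])
  ultimately have "card {x. poly f x = 0} \<le> k"
    using card_poly_roots_bound le_trans by blast
  moreover have "{x. poly f x = 0} = {x. x ^ k = 1}"
    by (auto simp: f_def poly_monom)
  ultimately have "card {x::'a. x ^ k = 1} < card (UNIV - {0::'a})"
    using assms by (simp add: card_Diff_singleton)
  hence "\<not> UNIV - {0::'a} \<subseteq> {x. x ^ k = 1}"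
    by (auto dest!: card_mono[rotated])
  then obtain c :: 'a where c: "c \<noteq> 0" "c ^ k \<noteq> 1"
    by auto
  have "(\<Sum>s\<in>(UNIV::'a set). s ^ k) = (\<Sum>s\<in>(UNIV::'a set). (c * s) ^ k)"
    by (rule sum.reindex_bij_witness[of _ "\<lambda>y. c * y" "\<lambda>y. y / c"]) (use c in auto)
  also have "\<dots> = c ^ k * (\<Sum>s\<in>(UNIV::'a set). s ^ k)"
    by (simp add: power_mult_distrib sum_distrib_left)
  finally have "(1 - c ^ k) * (\<Sum>s\<in>(UNIV::'a set). s ^ k) = 0"
    by (simp add: algebra_simps)
  thus ?thesis
    using c by simp
qed

lemma finite_field_power_sum:
  assumes "1 \<le> k"
  shows "(\<Sum>s\<in>(UNIV::'a::{finite,field} set). s ^ k) = (if (CARD('a) - 1) dvd k then -1 else 0)"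
proof -
  let ?Q = "CARD('a) - 1"
  have Q: "?Q \<ge> 1"
    using card_finite_field_ge_2[where 'a='a] by simp
  have reduce: "s ^ k = s ^ (k mod ?Q)" if "k mod ?Q \<ge> 1" for s :: 'a
    using finite_field_power_mod[OF that, of s "k div ?Q"] by (simp add: mod_div_mult_eq)
  show ?thesis
  proof (cases "?Q dvd k")
    case True
    have "s ^ k = (if s = 0 then 0 else 1)" for s :: 'a
    proof -
      obtain t where "k = ?Q * t" "t \<ge> 1"
        using True assms by (metis dvdE mult_0_right less_one not_le)
      thus ?thesis
        using finite_field_power_card_minus_1[of s] Q by (simp add: power_mult power_0_left)
    qed
    hence "(\<Sum>s\<in>(UNIV::'a set). s ^ k) = of_nat (card (UNIV - {0::'a}))"
      by (simp add: sum.If_cases Compl_eq_Diff_UNIV)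
    also have "\<dots> = -1"
      using card_finite_field_ge_2[where 'a='a]
      by (simp add: card_Diff_singleton of_nat_card_finite_field)
    finally show ?thesis
      using True by simp
  next
    case False
    hence "k mod ?Q \<ge> 1" "k mod ?Q < ?Q"
      using Q by (auto simp: dvd_eq_mod_eq_0)
    with False show ?thesis
      using reduce finite_field_power_sum_eq_0[of "k mod ?Q"] by simp
  qed
qed

lemma finite_field_sum_UNIV:
  assumes "CARD('a::{finite,field}) \<ge> 3"
  shows "(\<Sum>s\<in>(UNIV::'a set). s) = 0"
  using finite_field_power_sum[of 1, where 'a='a] assms by simp

lemma sum_power_card_minus_2_shift:
  assumes "CARD('a::{finite,field}) \<ge> 3" "i < CARD('a)"
  shows "(\<Sum>s\<in>(UNIV::'a set). s ^ (i + (CARD('a) - 2))) = (if i = 1 then -1 else 0)"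
proof -
  have "(CARD('a) - 1) dvd (i + (CARD('a) - 2)) \<longleftrightarrow> i = 1"
  proof (cases i)
    case 0
    thus ?thesis
      using assms nat_dvd_not_less[of "CARD('a) - 2" "CARD('a) - 1"] by auto
  next
    case (Suc l)
    hence "i + (CARD('a) - 2) = l + (CARD('a) - 1)"
      using assms by simp
    hence "(CARD('a) - 1) dvd (i + (CARD('a) - 2)) \<longleftrightarrow> (CARD('a) - 1) dvd l"
      by (simp only: dvd_add_triv_right_iff)
    moreover have "(CARD('a) - 1) dvd l \<longleftrightarrow> l = 0"
      using Suc assms nat_dvd_not_less[of l "CARD('a) - 1"] by (cases "l = 0") auto
    ultimately show ?thesis
      using Suc by simp
  qed
  thus ?thesis
    using finite_field_power_sum[of "i + (CARD('a) - 2)", where 'a='a] assms by simp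
qed

lemma sum_power_add_inverse_mult:
  fixes c :: "'a::{finite,field}"
  assumes Q: "CARD('a) \<ge> 3" and j: "1 \<le> j" "j < CARD('a)"
  shows "(\<Sum>t\<in>UNIV. (c + inverse t) ^ j * t) = - of_nat j * c ^ (j - 1)"
proof -
  have "(\<Sum>t\<in>UNIV. (c + inverse t) ^ j * t) = (\<Sum>s\<in>UNIV. (c + s) ^ j * s ^ (CARD('a) - 2))"
    by (rule sum.reindex_bij_witness[of _ inverse inverse])
       (simp_all add: inverse_eq_power_card_minus_2[OF Q, symmetric])
  also have "\<dots> = (\<Sum>s\<in>UNIV. \<Sum>i\<le>j. of_nat (j choose i) * c ^ (j - i) * s ^ (i + (CARD('a) - 2)))"
  proof (intro sum.cong refl)
    fix s :: 'a
    have "(c + s) ^ j = (\<Sum>i\<le>j. of_nat (j choose i) * s ^ i * c ^ (j - i))"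
      using binomial_ring[of s c j] by (simp add: add.commute)
    thus "(c + s) ^ j * s ^ (CARD('a) - 2)
        = (\<Sum>i\<le>j. of_nat (j choose i) * c ^ (j - i) * s ^ (i + (CARD('a) - 2)))"
      by (simp add: sum_distrib_left sum_distrib_right power_add mult_ac)
  qed
  also have "\<dots> = (\<Sum>i\<le>j. of_nat (j choose i) * c ^ (j - i) * (\<Sum>s\<in>UNIV. s ^ (i + (CARD('a) - 2))))"
    by (subst sum.swap) (simp add: sum_distrib_left)
  also have "\<dots> = (\<Sum>i\<le>j. if i = 1 then - (of_nat (j choose i) * c ^ (j - i)) else 0)"
  proof (intro sum.cong refl)
    fix i
    assume "i \<in> {..j}"
    hence "i < CARD('a)"
      using j by simp
    thus "of_nat (j choose i) * c ^ (j - i) * (\<Sum>s\<in>UNIV. s ^ (i + (CARD('a) - 2)))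
        = (if i = 1 then - (of_nat (j choose i) * c ^ (j - i)) else 0)"
      by (simp add: sum_power_card_minus_2_shift[OF Q])
  qed
  also have "\<dots> = - of_nat j * c ^ (j - 1)"
    using j by simp
  finally show ?thesis .
qed

lemma bij_power_coprime:
  assumes "coprime b (CARD('a::{finite,field}) - 1)" "b \<noteq> 0"
  shows "bij (\<lambda>x::'a. x ^ b)"
proof -
  obtain u v where "b * u = (CARD('a) - 1) * v + gcd b (CARD('a) - 1)"
    using bezout_nat[OF assms(2)] by blast
  hence "b * u = 1 + v * (CARD('a) - 1)"
    using assms(1) by (simp add: mult.commute)
  hence "(x ^ b) ^ u = x" for x :: 'a
    using finite_field_power_mod[of 1 x v] by (simp flip: power_mult)
  hence "inj (\<lambda>x::'a. x ^ b)"
    by (metis injI)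
  thus ?thesis
    by (simp add: bij_def finite_UNIV_inj_surj)
qed

lemma prime_CHAR_finite_field: "prime CHAR('a::{finite,field})"
  by (intro prime_CHAR_semidom finite_imp_CHAR_pos) simp

lemma CHAR_eq_prime_if_card_eq_power:
  assumes "prime p" "CARD('a::{finite,field}) = p ^ r"
  shows "CHAR('a) = p"
proof -
  have "CHAR('a) dvd p ^ r"
    using CHAR_dvd_CARD[where 'a='a] assms(2) by simp
  hence "CHAR('a) dvd p"
    using prime_CHAR_finite_field[where 'a='a] prime_dvd_power by blast
  thus ?thesis
    using prime_CHAR_finite_field[where 'a='a] assms(1) by (simp add: primes_dvd_imp_eq)
qed

lemma Frobenius_add:
  fixes x y :: "'a::{finite,field}"
  shows "(x + y) ^ CHAR('a) = x ^ CHAR('a) + y ^ CHAR('a)"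
  by (rule freshmans_dream) (simp_all add: prime_CHAR_finite_field)

lemma Frobenius_diff:
  fixes x y :: "'a::{finite,field}"
  shows "(x - y) ^ CHAR('a) = x ^ CHAR('a) - y ^ CHAR('a)"
  using Frobenius_add[of "x - y" y] by (simp add: algebra_simps)

lemma inj_Frobenius: "inj (\<lambda>x::'a::{finite,field}. x ^ CHAR('a))"
proof (rule injI)
  fix x y :: 'a
  assume "x ^ CHAR('a) = y ^ CHAR('a)"
  hence "(x - y) ^ CHAR('a) = 0"
    by (simp add: Frobenius_diff)
  thus "x = y"
    by simp
qed

lemma Frobenius_fixed_imp_of_nat:
  fixes x :: "'a::{finite,field}"
  assumes "x ^ CHAR('a) = x"
  shows "x \<in> range (of_nat :: nat \<Rightarrow> 'a)"
proof -
  let ?p = "CHAR('a)"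
  have p: "?p \<ge> 2"
    using prime_CHAR_finite_field prime_ge_2_nat by blast
  define f :: "'a poly" where "f = monom 1 ?p - monom 1 1"
  have "coeff f ?p = 1"
    using p by (simp add: f_def)
  moreover have "degree f \<le> ?p"
    unfolding f_def by (intro degree_diff_le) (use p in \<open>auto simp: degree_monom_le degree_monom_eq\<close>)
  ultimately have "card {x. poly f x = 0} \<le> ?p"
    using card_poly_roots_bound[of f] by fastforce
  moreover have "{x. poly f x = 0} = {x::'a. x ^ ?p = x}"
    by (auto simp: f_def poly_monom)
  ultimately have card_fixed: "card {x::'a. x ^ ?p = x} \<le> ?p"
    by simp
  have "(of_nat k :: 'a) ^ ?p = of_nat k" for k
    by (induction k) (use p in \<open>simp_all add: Frobenius_add\<close>)
  hence sub: "of_nat ` {..<?p} \<subseteq> {x::'a. x ^ ?p = x}"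
    by auto
  have "inj_on (of_nat :: nat \<Rightarrow> 'a) {..<?p}"
    by (rule inj_onI) (auto simp: of_nat_eq_iff_cong_CHAR cong_def)
  hence "card (of_nat ` {..<?p} :: 'a set) = ?p"
    by (simp add: card_image)
  hence "of_nat ` {..<?p} = {x::'a. x ^ ?p = x}"
    using card_fixed sub by (simp add: card_seteq)
  thus ?thesis
    using assms by auto
qed

section \<open>Finitely supported vectors\<close>

definition padded_vectors :: "nat \<Rightarrow> 'a::zero set \<Rightarrow> (nat \<Rightarrow> 'a) set" where
  "padded_vectors n A = {a. (\<forall>i<n. a i \<in> A) \<and> (\<forall>i\<ge>n. a i = 0)}"

lemma exp_box_eq_padded_vectors: "exp_box n q = padded_vectors n {..<q}"
  by (auto simp: exp_box_def padded_vectors_def)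

lemma padded_vectors_0: "padded_vectors 0 A = {\<lambda>_. 0}"
  by (auto simp: padded_vectors_def)

lemma finite_padded_vectors:
  assumes "finite A"
  shows "finite (padded_vectors n A)"
proof (rule finite_imageD)
  show "inj_on (\<lambda>a. restrict a {..<n}) (padded_vectors n A)"
  proof (rule inj_onI, rule ext)
    fix a b i
    assume "a \<in> padded_vectors n A" "b \<in> padded_vectors n A" "restrict a {..<n} = restrict b {..<n}"
    thus "a i = b i"
      by (cases "i < n") (auto simp: padded_vectors_def dest: fun_cong[where x = i])
  qed
  have "(\<lambda>a. restrict a {..<n}) ` padded_vectors n A \<subseteq> PiE {..<n} (\<lambda>_. A)"
    by (simp add: image_subset_iff padded_vectors_def restrict_PiE_iff)
  thus "finite ((\<lambda>a. restrict a {..<n}) ` padded_vectors n A)"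
    using assms by (meson finite_PiE finite_lessThan finite_subset)
qed

lemma sum_padded_vectors_coord:
  assumes "j < n" "0 \<in> A"
  shows "sum g (padded_vectors n A) = (\<Sum>a\<in>{a\<in>padded_vectors n A. a j = 0}. \<Sum>t\<in>A. g (a(j := t)))"
proof -
  have "(\<Sum>a\<in>{a\<in>padded_vectors n A. a j = 0}. \<Sum>t\<in>A. g (a(j := t)))
      = (\<Sum>(a, t)\<in>{a\<in>padded_vectors n A. a j = 0} \<times> A. g (a(j := t)))"
    by (rule sum.cartesian_product)
  also have "\<dots> = sum g (padded_vectors n A)"
    by (rule sum.reindex_bij_witness[of _ "\<lambda>b. (b(j := 0), b j)" "\<lambda>(a, t). a(j := t)"])
       (use assms in \<open>auto simp: padded_vectors_def\<close>)
  finally show ?thesis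
    by simp
qed

lemma padded_vectors_Suc_coord_0:
  assumes "0 \<in> A"
  shows "{a\<in>padded_vectors (Suc n) A. a n = 0} = padded_vectors n A"
proof -
  have "(\<forall>i\<ge>Suc n. a i = 0) \<and> a n = 0 \<longleftrightarrow> (\<forall>i\<ge>n. a i = 0)" for a :: "nat \<Rightarrow> 'a"
    by (metis Suc_le_eq le_eq_less_or_eq order_refl)
  thus ?thesis
    using assms by (auto simp: padded_vectors_def less_Suc_eq)
qed

lemma sum_padded_vectors_Suc:
  "0 \<in> A \<Longrightarrow> sum g (padded_vectors (Suc n) A) = (\<Sum>a\<in>padded_vectors n A. \<Sum>t\<in>A. g (a(n := t)))"
  using sum_padded_vectors_coord[of n "Suc n" A g] by (simp add: padded_vectors_Suc_coord_0)

lemma prod_sum_eq_sum_padded_vectors: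
  fixes f :: "nat \<Rightarrow> 'b::zero \<Rightarrow> 'a::comm_semiring_1"
  assumes "0 \<in> A"
  shows "(\<Prod>i<n. \<Sum>k\<in>A. f i k) = (\<Sum>e\<in>padded_vectors n A. \<Prod>i<n. f i (e i))"
proof (induction n)
  case (Suc n)
  have "(\<Prod>i<Suc n. \<Sum>k\<in>A. f i k) = (\<Sum>e\<in>padded_vectors n A. \<Sum>k\<in>A. (\<Prod>i<n. f i (e i)) * f n k)"
    by (simp add: Suc sum_product)
  also have "\<dots> = (\<Sum>e\<in>padded_vectors n A. \<Sum>k\<in>A. \<Prod>i<Suc n. f i ((e(n := k)) i))"
    by (intro sum.cong refl) simp
  also have "\<dots> = (\<Sum>e\<in>padded_vectors (Suc n) A. \<Prod>i<Suc n. f i (e i))"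
    by (rule sum_padded_vectors_Suc[OF assms, symmetric])
  finally show ?case .
qed (simp add: padded_vectors_0)

section \<open>Lagrange interpolation in several variables\<close>

text \<open>The coefficient of \<open>x^k\<close> in \<open>1 - (x - t)^(q-1)\<close>, the indicator polynomial of \<open>t\<close>.\<close>

definition lagrange_weight :: "nat \<Rightarrow> 'a::{finite,field} \<Rightarrow> 'a" where
  "lagrange_weight k t = (if k = 0 then 1 else 0) - t ^ (CARD('a) - 1 - k)"

definition interp_coeff :: "nat \<Rightarrow> ((nat \<Rightarrow> 'a::{finite,field}) \<Rightarrow> 'a) \<Rightarrow> (nat \<Rightarrow> nat) \<Rightarrow> 'a" where
  "interp_coeff n F e =
     (if e \<in> exp_box n CARD('a)
      then \<Sum>a\<in>padded_vectors n UNIV. F a * (\<Prod>i<n. lagrange_weight (e i) (a i))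
      else 0)"

lemma sum_lagrange_weight:
  fixes x a :: "'a::{finite,field}"
  shows "(\<Sum>k<CARD('a). lagrange_weight k a * x ^ k) = (if x = a then 1 else 0)"
proof -
  let ?Q = "CARD('a)"
  have "(\<Sum>k<?Q. (if k = 0 then 1 else 0) * x ^ k) = (\<Sum>k<?Q. if k = 0 then 1 else 0)"
    by (intro sum.cong) auto
  hence eq: "(\<Sum>k<?Q. lagrange_weight k a * x ^ k) = 1 - (\<Sum>k<?Q. a ^ (?Q - Suc k) * x ^ k)"
    unfolding lagrange_weight_def by (simp add: left_diff_distrib sum_subtractf)
  show ?thesis
  proof (cases "x = a")
    case True
    hence "(\<Sum>k<?Q. a ^ (?Q - Suc k) * x ^ k) = of_nat ?Q * a ^ (?Q - 1)"
      by (simp flip: power_add)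
    with True eq show ?thesis
      by (simp add: of_nat_card_finite_field)
  next
    case False
    have "(x - a) * (\<Sum>k<?Q. a ^ (?Q - Suc k) * x ^ k) = x ^ ?Q - a ^ ?Q"
      by (rule power_diff_sumr2[symmetric])
    also have "\<dots> = (x - a) * 1"
      by (simp add: finite_field_power_card)
    finally show ?thesis
      using eq False by simp
  qed
qed

lemma reduced_mpoly_interp_coeff: "reduced_mpoly n CARD('a) (interp_coeff n (F :: _ \<Rightarrow> 'a::{finite,field}))"
  by (simp add: reduced_mpoly_def interp_coeff_def)

lemma mpoly_eval_interp_coeff:
  fixes F :: "(nat \<Rightarrow> 'a::{finite,field}) \<Rightarrow> 'a"
  assumes local: "\<And>x y. (\<forall>i<n. x i = y i) \<Longrightarrow> F x = F y"
  shows "mpoly_eval n CARD('a) (interp_coeff n F) x = F x"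
proof -
  let ?Q = "CARD('a)" and ?V = "padded_vectors n (UNIV :: 'a set)"
  define x' where "x' = (\<lambda>i. if i < n then x i else 0)"
  have "mpoly_eval n ?Q (interp_coeff n F) x
      = (\<Sum>e\<in>exp_box n ?Q. \<Sum>a\<in>?V. F a * (\<Prod>i<n. lagrange_weight (e i) (a i) * x i ^ e i))"
    unfolding mpoly_eval_def interp_coeff_def
    by (intro sum.cong refl) (simp add: sum_distrib_left sum_distrib_right prod.distrib mult_ac)
  also have "\<dots> = (\<Sum>a\<in>?V. F a * (\<Sum>e\<in>exp_box n ?Q. \<Prod>i<n. lagrange_weight (e i) (a i) * x i ^ e i))"
    by (subst sum.swap) (simp add: sum_distrib_left)
  also have "\<dots> = (\<Sum>a\<in>?V. F a * (\<Prod>i<n. \<Sum>k<?Q. lagrange_weight k (a i) * x i ^ k))"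
    by (simp add: exp_box_eq_padded_vectors prod_sum_eq_sum_padded_vectors)
  also have "\<dots> = (\<Sum>a\<in>?V. if a = x' then F a else 0)"
  proof (intro sum.cong refl)
    fix a
    assume "a \<in> ?V"
    hence "(\<forall>i<n. x i = a i) \<longleftrightarrow> a = x'"
      by (auto simp: x'_def padded_vectors_def fun_eq_iff)
    thus "F a * (\<Prod>i<n. \<Sum>k<?Q. lagrange_weight k (a i) * x i ^ k) = (if a = x' then F a else 0)"
      by (auto simp: sum_lagrange_weight)
  qed
  also have "\<dots> = F x"
    using local[of x' x] finite_padded_vectors[of "UNIV :: 'a set" n]
    by (simp add: x'_def padded_vectors_def)
  finally show ?thesis .
qed

lemma is_LPP_interp_coeff:
  fixes F :: "(nat \<Rightarrow> 'a::{finite,field}) \<Rightarrow> 'a"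
  assumes "\<And>x y. (\<forall>i<n. x i = y i) \<Longrightarrow> F x = F y"
    and "\<And>i a. i < n \<Longrightarrow> bij (\<lambda>t. F (a(i := t)))"
  shows "is_LPP n CARD('a) (interp_coeff n F)"
  using assms by (simp add: is_LPP_def mpoly_eval_interp_coeff)

lemma interp_coeff_eq_0_if_bij:
  fixes F :: "(nat \<Rightarrow> 'a::{finite,field}) \<Rightarrow> 'a"
  assumes Q: "CARD('a) \<ge> 3" and j: "j < n" and bij: "\<And>a. bij (\<lambda>t. F (a(j := t)))"
    and ej: "e j = CARD('a) - 1"
  shows "interp_coeff n F e = 0"
proof (cases "e \<in> exp_box n CARD('a)")
  case True
  let ?V = "{a\<in>padded_vectors n (UNIV :: 'a set). a j = 0}"
    and ?w = "\<lambda>a. \<Prod>i\<in>{..<n}-{j}. lagrange_weight (e i) (a i)"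
  have "interp_coeff n F e = (\<Sum>a\<in>?V. \<Sum>t\<in>UNIV. F (a(j := t)) * (\<Prod>i<n. lagrange_weight (e i) ((a(j := t)) i)))"
    using True j by (simp add: interp_coeff_def sum_padded_vectors_coord)
  also have "\<dots> = (\<Sum>a\<in>?V. - ?w a * (\<Sum>t\<in>UNIV. F (a(j := t))))"
  proof (intro sum.cong refl)
    fix a :: "nat \<Rightarrow> 'a"
    have "lagrange_weight (e j) t = -1" for t :: 'a
      using ej Q by (simp add: lagrange_weight_def)
    moreover have "(\<Prod>i<n. lagrange_weight (e i) ((a(j := t)) i)) = lagrange_weight (e j) t * ?w a" for t
      using j by (subst prod.remove[of _ j]) (auto intro!: prod.cong)
    ultimately show "(\<Sum>t\<in>UNIV. F (a(j := t)) * (\<Prod>i<n. lagrange_weight (e i) ((a(j := t)) i)))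
        = - ?w a * (\<Sum>t\<in>UNIV. F (a(j := t)))"
      by (simp add: sum_distrib_left sum_distrib_right sum_negf mult_ac)
  qed
  also have "\<dots> = 0"
  proof (intro sum.neutral ballI)
    fix a :: "nat \<Rightarrow> 'a"
    have "(\<Sum>t\<in>UNIV. F (a(j := t))) = (\<Sum>t\<in>UNIV. t)"
      using sum.reindex_bij_betw[of "\<lambda>t. F (a(j := t))" UNIV UNIV "\<lambda>t. t"] bij[of a] by (simp add: bij_def)
    thus "- ?w a * (\<Sum>t\<in>UNIV. F (a(j := t))) = 0"
      by (simp add: finite_field_sum_UNIV[OF Q])
  qed
  finally show ?thesis .
qed (simp add: interp_coeff_def)

lemma interp_coeff_top:
  fixes F :: "(nat \<Rightarrow> 'a::{finite,field}) \<Rightarrow> 'a"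
  assumes "CARD('a) \<ge> 3"
  shows "interp_coeff n F (\<lambda>i. if i < n then CARD('a) - 2 else 0)
       = (-1) ^ n * (\<Sum>a\<in>padded_vectors n UNIV. F a * (\<Prod>i<n. a i))"
proof -
  let ?top = "\<lambda>i. if i < n then CARD('a) - 2 else 0"
  have w: "lagrange_weight (CARD('a) - 2) t = - t" for t :: 'a
    using assms by (simp add: lagrange_weight_def numeral_2_eq_2 Suc_diff_Suc)
  have "interp_coeff n F ?top = (\<Sum>a\<in>padded_vectors n UNIV. F a * (\<Prod>i<n. - a i))"
    unfolding interp_coeff_def by (auto simp: exp_box_def w intro!: sum.cong prod.cong)
  also have "\<dots> = (-1) ^ n * (\<Sum>a\<in>padded_vectors n UNIV. F a * (\<Prod>i<n. a i))"
    by (simp add: prod_uminus sum_distrib_left mult_ac)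
  finally show ?thesis .
qed

lemma mpoly_total_degree_interp_coeff:
  fixes F :: "(nat \<Rightarrow> 'a::{finite,field}) \<Rightarrow> 'a"
  assumes Q: "CARD('a) \<ge> 3"
    and bij: "\<And>i a. i < n \<Longrightarrow> bij (\<lambda>t. F (a(i := t)))"
    and top: "(\<Sum>a\<in>padded_vectors n UNIV. F a * (\<Prod>i<n. a i)) \<noteq> 0"
  shows "mpoly_total_degree n CARD('a) (interp_coeff n F) = n * (CARD('a) - 2)"
  unfolding mpoly_total_degree_def
proof (rule Max_eqI)
  let ?S = "{e \<in> exp_box n CARD('a). interp_coeff n F e \<noteq> 0}"
  show "finite ((\<lambda>e. \<Sum>i<n. e i) ` ?S)"
    using finite_padded_vectors[of "{..<CARD('a)}" n] by (simp add: exp_box_eq_padded_vectors)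
  show "y \<le> n * (CARD('a) - 2)" if y: "y \<in> (\<lambda>e. \<Sum>i<n. e i) ` ?S" for y
  proof -
    obtain e where e: "e \<in> exp_box n CARD('a)" "interp_coeff n F e \<noteq> 0" "y = (\<Sum>i<n. e i)"
      using y by auto
    have "e i \<le> CARD('a) - 2" if "i < n" for i
    proof -
      have "e i \<noteq> CARD('a) - 1"
        using interp_coeff_eq_0_if_bij[OF Q that bij[OF that]] e(2) by blast
      moreover have "e i < CARD('a)"
        using e(1) that by (simp add: exp_box_def)
      ultimately show ?thesis
        by linarith
    qed
    hence "(\<Sum>i<n. e i) \<le> (\<Sum>i<n. CARD('a) - 2)"
      by (intro sum_mono) simp
    thus ?thesis
      using e(3) by simp
  qed
  let ?top = "\<lambda>i. if i < n then CARD('a) - 2 else 0"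
  have "?top \<in> exp_box n CARD('a)"
    using Q by (simp add: exp_box_def)
  moreover have "interp_coeff n F ?top \<noteq> 0"
    using top by (simp add: interp_coeff_top[OF Q])
  moreover have "(\<Sum>i<n. ?top i) = n * (CARD('a) - 2)"
    by simp
  ultimately show "n * (CARD('a) - 2) \<in> (\<lambda>e. \<Sum>i<n. e i) ` ?S"
    by (intro image_eqI[where x = ?top]) auto
qed

lemma lagrange_weight_Frobenius:
  "lagrange_weight k (t :: 'a::{finite,field}) ^ CHAR('a) = lagrange_weight k (t ^ CHAR('a))"
proof -
  have "CHAR('a) > 0"
    using prime_CHAR_finite_field prime_gt_0_nat by blast
  thus ?thesis
    by (simp add: lagrange_weight_def Frobenius_diff flip: power_mult) (simp add: mult.commute)
qed

lemma interp_coeff_in_prime_field: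
  fixes F :: "(nat \<Rightarrow> 'a::{finite,field}) \<Rightarrow> 'a"
  assumes F: "\<And>a. F a ^ CHAR('a) = F (\<lambda>i. a i ^ CHAR('a))"
  shows "interp_coeff n F e \<in> range (of_nat :: nat \<Rightarrow> 'a)"
proof (cases "e \<in> exp_box n CARD('a)")
  case True
  let ?p = "CHAR('a)" and ?V = "padded_vectors n (UNIV :: 'a set)"
  let ?Frob = "\<lambda>a i. a i ^ ?p" and ?G = "\<lambda>a. F a * (\<Prod>i<n. lagrange_weight (e i) (a i))"
  have p: "?p > 0"
    using prime_CHAR_finite_field prime_gt_0_nat by blast
  have "inj_on ?Frob ?V"
    by (auto intro!: inj_onI simp: fun_eq_iff inj_eq[OF inj_Frobenius])
  moreover have "?Frob ` ?V \<subseteq> ?V"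
    using p by (auto simp: padded_vectors_def)
  ultimately have image: "?Frob ` ?V = ?V"
    by (simp add: endo_inj_surj finite_padded_vectors)
  have "interp_coeff n F e ^ ?p = (\<Sum>a\<in>?V. ?G (?Frob a))"
    using True
    by (simp add: interp_coeff_def freshmans_dream_sum prime_CHAR_finite_field power_mult_distrib
        prod_power_distrib F lagrange_weight_Frobenius)
  also have "\<dots> = sum ?G (?Frob ` ?V)"
    using \<open>inj_on ?Frob ?V\<close> by (simp add: sum.reindex)
  also have "\<dots> = interp_coeff n F e"
    using True by (simp add: image interp_coeff_def)
  finally show ?thesis
    by (rule Frobenius_fixed_imp_of_nat)
qed (simp add: interp_coeff_def, metis of_nat_0 rangeI)

section \<open>The chain of inverses\<close>

fun inv_chain :: "nat \<Rightarrow> (nat \<Rightarrow> 'a::field) \<Rightarrow> 'a" where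
  "inv_chain 0 a = 1"
| "inv_chain (Suc m) a = inverse (inv_chain m a) + inverse (a m)"

lemma inv_chain_cong: "(\<And>i. i < m \<Longrightarrow> a i = a' i) \<Longrightarrow> inv_chain m a = inv_chain m a'"
  by (induction m) auto

lemma bij_inv_chain:
  fixes a :: "nat \<Rightarrow> 'a::field"
  assumes "i < m"
  shows "bij (\<lambda>t. inv_chain m (a(i := t)))"
  using assms
proof (induction m)
  case (Suc m)
  have bij_inverse: "bij (inverse :: 'a \<Rightarrow> 'a)"
    by (rule involuntory_imp_bij) simp
  have bij_plus: "bij ((+) c)" "bij (\<lambda>x. x + c)" for c :: 'a
    by (auto simp: bij_def surj_def intro!: exI[of _ "_ - c"])
  show ?case
  proof (cases "i = m")
    case True
    have eq: "(\<lambda>t. inv_chain (Suc m) (a(i := t))) = (+) (inverse (inv_chain m a)) \<circ> inverse"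
      using True by (auto simp: fun_eq_iff intro: inv_chain_cong)
    show ?thesis
      unfolding eq by (rule bij_comp[OF bij_inverse bij_plus(1)])
  next
    case False
    with Suc.prems have "bij (\<lambda>t. inv_chain m (a(i := t)))"
      by (intro Suc.IH) simp
    moreover have eq: "(\<lambda>t. inv_chain (Suc m) (a(i := t)))
        = (\<lambda>x. x + inverse (a m)) \<circ> inverse \<circ> (\<lambda>t. inv_chain m (a(i := t)))"
      using False by (auto simp: fun_eq_iff)
    ultimately show ?thesis
      unfolding eq by (intro bij_comp bij_inverse bij_plus)
  qed
qed simp

lemma inv_chain_Frobenius:
  "inv_chain m (a :: nat \<Rightarrow> 'a::{finite,field}) ^ CHAR('a) = inv_chain m (\<lambda>i. a i ^ CHAR('a))"
  by (induction m) (simp_all add: Frobenius_add power_inverse)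

definition inv_chain_moment :: "nat \<Rightarrow> nat \<Rightarrow> 'a::{finite,field}" where
  "inv_chain_moment j m = (\<Sum>a\<in>padded_vectors m UNIV. inv_chain m a ^ j * (\<Prod>i<m. a i))"

lemma inv_chain_moment_Suc:
  assumes Q: "CARD('a::{finite,field}) \<ge> 3" and j: "2 \<le> j" "j < CARD('a)"
  shows "(inv_chain_moment j (Suc m) :: 'a) = - of_nat j * inv_chain_moment (CARD('a) - j) m"
proof -
  have "(inv_chain_moment j (Suc m) :: 'a)
      = (\<Sum>a\<in>padded_vectors m UNIV. (\<Prod>i<m. a i) * (\<Sum>t\<in>UNIV. (inverse (inv_chain m a) + inverse t) ^ j * t))"
  proof -
    have "inv_chain m (a(m := t)) = inv_chain m a" for a :: "nat \<Rightarrow> 'a" and t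
      by (rule inv_chain_cong) simp
    thus ?thesis
      by (simp add: inv_chain_moment_def sum_padded_vectors_Suc sum_distrib_left mult_ac)
  qed
  also have "\<dots> = (\<Sum>a\<in>padded_vectors m UNIV. (\<Prod>i<m. a i) * (- of_nat j * inv_chain m a ^ (CARD('a) - j)))"
    using j power_inverse_eq_power_card_minus[OF j] by (simp add: sum_power_add_inverse_mult[OF Q])
  also have "\<dots> = - of_nat j * inv_chain_moment (CARD('a) - j) m"
    by (simp add: inv_chain_moment_def sum_distrib_left mult_ac)
  finally show ?thesis .
qed

lemma inv_chain_moment_ne_0:
  assumes Q: "CARD('a::{finite,field}) \<ge> 3" and b: "2 \<le> b" "b + 2 \<le> CARD('a)"
    and b_ne_0: "(of_nat b :: 'a) \<noteq> 0"
  shows "(inv_chain_moment b m :: 'a) \<noteq> 0 \<and> (inv_chain_moment (CARD('a) - b) m :: 'a) \<noteq> 0"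
proof (induction m)
  case 0
  show ?case
    by (simp add: inv_chain_moment_def padded_vectors_0)
next
  case (Suc m)
  have "(of_nat (CARD('a) - b) :: 'a) = - of_nat b"
    using b by (simp add: of_nat_card_finite_field)
  moreover have "CARD('a) - (CARD('a) - b) = b"
    using b by simp
  ultimately show ?case
    using Suc b b_ne_0
    by (simp add: inv_chain_moment_Suc[OF Q, of b] inv_chain_moment_Suc[OF Q, of "CARD('a) - b"])
qed

theorem mainTheorem11:
  fixes p r b n :: nat
  assumes "prime p"
    and "card (UNIV :: 'a::{finite,field} set) = p ^ r"
    and "1 < b" and "b < p - 1"
    and "coprime b (p ^ r - 1)"
    and "n \<ge> 1"
  shows "\<exists>c :: (nat \<Rightarrow> nat) \<Rightarrow> 'a.
           reduced_mpoly n (p ^ r) c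
         \<and> (\<forall>e. c e \<in> range (of_nat :: nat \<Rightarrow> 'a))
         \<and> is_LPP n (p ^ r) c
         \<and> mpoly_total_degree n (p ^ r) c = n * (p ^ r - 2)"
proof -
  have card: "CARD('a) = p ^ r"
    using assms(2) .
  have "r \<noteq> 0"
    using card_finite_field_ge_2[where 'a='a] card by (cases r) auto
  hence "p \<le> CARD('a)"
    using card prime_gt_0_nat[OF assms(1)] by (simp add: self_le_power)
  hence b: "2 \<le> b" "b + 2 \<le> CARD('a)" and Q: "CARD('a) \<ge> 3"
    using assms(3,4) by auto
  have "(of_nat b :: 'a) \<noteq> 0"
    using CHAR_eq_prime_if_card_eq_power[OF assms(1) card] assms(3,4) nat_dvd_not_less[of b p]
    by (auto simp: of_nat_eq_0_iff_char_dvd)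
  define F :: "(nat \<Rightarrow> 'a) \<Rightarrow> 'a" where "F a = inv_chain n a ^ b" for a
  have local: "F x = F y" if "\<forall>i<n. x i = y i" for x y
    using that by (simp add: F_def cong: inv_chain_cong)
  have "bij (\<lambda>x::'a. x ^ b)"
    using bij_power_coprime[of b, where 'a='a] assms(3,5) card by simp
  hence bij: "bij (\<lambda>t. F (a(i := t)))" if "i < n" for i a
    using bij_comp[OF bij_inv_chain[OF that]] by (simp add: F_def comp_def)
  have Frobenius: "F a ^ CHAR('a) = F (\<lambda>i. a i ^ CHAR('a))" for a
    by (simp add: F_def flip: inv_chain_Frobenius power_mult) (simp add: mult.commute)
  have "(\<Sum>a\<in>padded_vectors n UNIV. F a * (\<Prod>i<n. a i)) \<noteq> 0"
    using inv_chain_moment_ne_0[OF Q b] \<open>of_nat b \<noteq> 0\<close> by (simp add: F_def inv_chain_moment_def)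
  thus ?thesis
    unfolding card[symmetric]
    using reduced_mpoly_interp_coeff[of n F] interp_coeff_in_prime_field[of F n, OF Frobenius]
      is_LPP_interp_coeff[of n F, OF local bij] mpoly_total_degree_interp_coeff[of n F, OF Q bij]
    by blast
qed

end
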